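(* Suppose $\mathbf A$ is irreducible. Then for all $s\ge0$, $\phi^s$ is quasimultiplicative on $\mathbf S$.
   Context: $\mathbf A=\{A_i\}_{i\in\mathcal I}\subset\mathrm{SL}(3,\mathbb R)$ with $\mathcal I$ finite or countable, generating the semigroup $\mathbf S$; $A_u=A_{i_1}\cdots A_{i_m}$ for a finite word $u$, $\mathcal I^*$ the set of finite words. $\mathbf A$ is irreducible if no proper nonzero linear subspace of $\mathbb R^3$ is invariant under every $A_i$. For singular values $\alpha_1\ge\alpha_2\ge\alpha_3$ of $A$ and $s\ge0$: $\phi^s(A)=(\alpha_2/\alpha_1)^s$ if $0\le s\le1$; $\frac{\alpha_2}{\alpha_1}(\frac{\alpha_3}{\alpha_1})^{s-1}$ if $1\le s\le2$; $(\frac{\alpha_2\alpha_3}{\alpha_1^2})^s$ if $s\ge2$. A function $\phi:\mathbf S\to\mathbb R_{>0}$ is quasimultiplicative on $\mathbf S$ if there exist a finite $\Gamma\subset\mathcal I^*$ and $c>0$ such that for all $u,w\in\mathcal I^*$ there is $k\in\Gamma$ with $\phi(A_{ukw})\ge c\,\phi(A_u)\phi(A_w)$. *)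

theory Defs
  imports "HOL-Analysis.Analysis"
begin

definition diag3 :: "real \<Rightarrow> real \<Rightarrow> real \<Rightarrow> real^3^3" where
  "diag3 a b c = (\<chi> i j. if i = j then (if i = 0 then a else if i = 1 then b else c) else 0)"

definition sing_vals :: "real^3^3 \<Rightarrow> real \<times> real \<times> real" where
  "sing_vals M = (THE (a1, a2, a3). a1 \<ge> a2 \<and> a2 \<ge> a3 \<and> a3 \<ge> 0 \<and>
      (\<exists>U V. orthogonal_matrix U \<and> orthogonal_matrix V \<and> M = U ** diag3 a1 a2 a3 ** V))"

definition alpha1 :: "real^3^3 \<Rightarrow> real" where "alpha1 M = fst (sing_vals M)"
definition alpha2 :: "real^3^3 \<Rightarrow> real" where "alpha2 M = fst (snd (sing_vals M))"
definition alpha3 :: "real^3^3 \<Rightarrow> real" where "alpha3 M = snd (snd (sing_vals M))"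

definition phi :: "real \<Rightarrow> real^3^3 \<Rightarrow> real" where
  "phi s M =
     (if s \<le> 1 then (alpha2 M / alpha1 M) powr s
      else if s \<le> 2 then (alpha2 M / alpha1 M) * (alpha3 M / alpha1 M) powr (s - 1)
      else (alpha2 M * alpha3 M / (alpha1 M)^2) powr s)"

definition word_mat :: "('i \<Rightarrow> real^3^3) \<Rightarrow> 'i list \<Rightarrow> real^3^3" where
  "word_mat A u = foldr (\<lambda>i M. A i ** M) u (mat 1)"

definition irreducible_family :: "('i \<Rightarrow> real^3^3) \<Rightarrow> bool" where
  "irreducible_family A \<longleftrightarrow>
     \<not> (\<exists>V. subspace V \<and> V \<noteq> {0} \<and> V \<noteq> UNIV \<and> (\<forall>i. \<forall>v\<in>V. A i *v v \<in> V))"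

definition quasimultiplicative :: "('i \<Rightarrow> real^3^3) \<Rightarrow> (real^3^3 \<Rightarrow> real) \<Rightarrow> bool" where
  "quasimultiplicative A f \<longleftrightarrow>
     (\<exists>\<Gamma> c. finite \<Gamma> \<and> c > 0 \<and>
        (\<forall>u w. \<exists>k\<in>\<Gamma>. f (word_mat A (u @ k @ w)) \<ge> c * f (word_mat A u) * f (word_mat A w)))"

end

theory Submission
  imports Defs
begin

(*
  For det M = 1 the singular values satisfy alpha1 * alpha2 * alpha3 = 1, so phi^s M is a monomial
  (1 / alpha3 M)^p * (alpha1 M)^(-q) with exponents p, q >= 0 depending only on s. It therefore suffices
  to bound alpha1 from above and 1 / alpha3 from below along products A_u A_k A_w with k in a finite set.
  The top singular value alpha1 is submultiplicative, which handles the first bound for any finite set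
  of words k. For the second, 1 / alpha3 M is comparable to the norm of M^-1, and
  (A_u A_k A_w)^-1 = A_w^-1 A_k^-1 A_u^-1. Irreducibility passes to the inverse matrices, and then for
  nonzero X and Y some word k has X A_k^-1 Y nonzero; compactness of the pairs of unit matrices (X, Y)
  turns this into finitely many words k and a constant c with |X A_k^-1 Y| >= c |X| |Y| for some k.
*)

section \<open>Singular value decompositions of 3 by 3 matrices\<close>

lemma three_eq_zero [simp]: "(3::3) = 0"
  by simp

lemma exhaust_3_0: "(i::3) = 0 \<or> i = 1 \<or> i = 2"
  using exhaust_3[of i] by auto

lemma diag3_mult_vec:
  "diag3 a b c *v y = (\<chi> i. (if i = 0 then a else if i = 1 then b else c) * y $ i)"
  by (simp add: vec_eq_iff diag3_def matrix_vector_mult_def if_distrib[of "\<lambda>x. x * _"] cong: if_cong)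

lemma norm_vec3_sq: "(norm (y::real^3))\<^sup>2 = (y$0)\<^sup>2 + (y$1)\<^sup>2 + (y$2)\<^sup>2"
  unfolding power2_norm_eq_inner inner_vec_def sum_3 by (simp add: power2_eq_square)

lemma norm_diag3_sq: "(norm (diag3 a b c *v y))\<^sup>2 = a\<^sup>2 * (y$0)\<^sup>2 + b\<^sup>2 * (y$1)\<^sup>2 + c\<^sup>2 * (y$2)\<^sup>2"
  unfolding norm_vec3_sq diag3_mult_vec by (simp add: power_mult_distrib)

lemma det_diag3: "det (diag3 a b c) = a * b * c"
proof -
  have "det (diag3 a b c) = (\<Prod>i\<in>UNIV. diag3 a b c $ i $ i)"
    by (rule det_diagonal) (simp add: diag3_def)
  then show ?thesis
    unfolding UNIV_3 by (simp add: diag3_def)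
qed

lemma norm_diag3_le:
  assumes "a \<ge> b" "b \<ge> c" "c \<ge> 0"
  shows "norm (diag3 a b c *v y) \<le> a * norm y"
proof -
  have "(norm (diag3 a b c *v y))\<^sup>2 \<le> a\<^sup>2 * (y$0)\<^sup>2 + a\<^sup>2 * (y$1)\<^sup>2 + a\<^sup>2 * (y$2)\<^sup>2"
    unfolding norm_diag3_sq using assms by (intro add_mono mult_right_mono power_mono) auto
  also have "\<dots> = (a * norm y)\<^sup>2"
    unfolding power_mult_distrib norm_vec3_sq by (simp add: algebra_simps)
  finally show ?thesis
    using assms by (meson power2_le_imp_le mult_nonneg_nonneg norm_ge_zero order.trans)
qed

lemma norm_diag3_ge:
  assumes "a \<ge> b" "b \<ge> c" "c \<ge> 0"
  shows "c * norm y \<le> norm (diag3 a b c *v y)"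
proof -
  have "(c * norm y)\<^sup>2 = c\<^sup>2 * (y$0)\<^sup>2 + c\<^sup>2 * (y$1)\<^sup>2 + c\<^sup>2 * (y$2)\<^sup>2"
    unfolding power_mult_distrib norm_vec3_sq by (simp add: algebra_simps)
  also have "\<dots> \<le> (norm (diag3 a b c *v y))\<^sup>2"
    unfolding norm_diag3_sq using assms by (intro add_mono mult_right_mono power_mono) auto
  finally show ?thesis
    by (meson power2_le_imp_le norm_ge_zero)
qed

lemma norm_diag3_axis:
  "norm (diag3 a b c *v axis 0 1) = \<bar>a\<bar>" "norm (diag3 a b c *v axis 2 1) = \<bar>c\<bar>"
proof -
  have "(norm (diag3 a b c *v axis 0 1))\<^sup>2 = a\<^sup>2" "(norm (diag3 a b c *v axis 2 1))\<^sup>2 = c\<^sup>2"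
    by (simp_all add: norm_diag3_sq axis_def)
  then show "norm (diag3 a b c *v axis 0 1) = \<bar>a\<bar>" "norm (diag3 a b c *v axis 2 1) = \<bar>c\<bar>"
    by (metis norm_ge_zero real_sqrt_abs real_sqrt_unique)+
qed

lemma orthogonal_matrix_norm:
  fixes U :: "real^'n^'n"
  assumes "orthogonal_matrix U"
  shows "norm (U *v x) = norm x"
  using assms orthogonal_transformation_matrix orthogonal_transformation_norm
  by (metis matrix_of_matrix_vector_mul matrix_vector_mul_linear)

definition is_svd :: "real^3^3 \<Rightarrow> real \<Rightarrow> real \<Rightarrow> real \<Rightarrow> bool" where
  "is_svd M a1 a2 a3 \<longleftrightarrow> a1 \<ge> a2 \<and> a2 \<ge> a3 \<and> a3 \<ge> 0 \<and>
     (\<exists>U V. orthogonal_matrix U \<and> orthogonal_matrix V \<and> M = U ** diag3 a1 a2 a3 ** V)"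

lemma is_svd_norm_mult_vec:
  assumes "is_svd M a1 a2 a3"
  obtains V where "orthogonal_matrix V" "\<And>x. norm (M *v x) = norm (diag3 a1 a2 a3 *v (V *v x))"
proof -
  obtain U V where "orthogonal_matrix U" "orthogonal_matrix V" "M = U ** diag3 a1 a2 a3 ** V"
    using assms unfolding is_svd_def by blast
  then show thesis
    using that[of V] by (simp add: orthogonal_matrix_norm flip: matrix_vector_mul_assoc)
qed

lemma is_svd_norm_bounds:
  assumes "is_svd M a1 a2 a3"
  shows "norm (M *v x) \<le> a1 * norm x" "a3 * norm x \<le> norm (M *v x)"
proof -
  obtain V where V: "orthogonal_matrix V" and M: "\<And>x. norm (M *v x) = norm (diag3 a1 a2 a3 *v (V *v x))"
    using is_svd_norm_mult_vec[OF assms] by blast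
  have a: "a1 \<ge> a2" "a2 \<ge> a3" "a3 \<ge> 0"
    using assms unfolding is_svd_def by auto
  show "norm (M *v x) \<le> a1 * norm x"
    using norm_diag3_le[OF a, of "V *v x"] by (simp add: M V orthogonal_matrix_norm)
  show "a3 * norm x \<le> norm (M *v x)"
    using norm_diag3_ge[OF a, of "V *v x"] by (simp add: M V orthogonal_matrix_norm)
qed

lemma is_svd_attained:
  assumes "is_svd M a1 a2 a3"
  shows "\<exists>x. norm x = 1 \<and> norm (M *v x) = a1" "\<exists>x. norm x = 1 \<and> norm (M *v x) = a3"
proof -
  obtain V where V: "orthogonal_matrix V" and M: "\<And>x. norm (M *v x) = norm (diag3 a1 a2 a3 *v (V *v x))"
    using is_svd_norm_mult_vec[OF assms] by blast
  have VT: "V *v (transpose V *v e) = e" "norm (transpose V *v e) = norm e" for e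
    using V orthogonal_matrix_norm[of "transpose V"]
    by (metis matrix_vector_mul_assoc orthogonal_matrix_def matrix_vector_mul_lid orthogonal_matrix_transpose)+
  have "a1 \<ge> 0" "a3 \<ge> 0"
    using assms unfolding is_svd_def by linarith+
  then have "norm (M *v (transpose V *v axis 0 1)) = a1" "norm (M *v (transpose V *v axis 2 1)) = a3"
    unfolding M VT norm_diag3_axis by simp_all
  then show "\<exists>x. norm x = 1 \<and> norm (M *v x) = a1" "\<exists>x. norm x = 1 \<and> norm (M *v x) = a3"
    using VT(2) norm_axis_1 by metis+
qed

lemma is_svd_abs_det:
  assumes "is_svd M a1 a2 a3"
  shows "\<bar>det M\<bar> = a1 * a2 * a3"
proof -
  obtain U V where UV: "orthogonal_matrix U" "orthogonal_matrix V" and M: "M = U ** diag3 a1 a2 a3 ** V"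
    and a: "a1 \<ge> a2" "a2 \<ge> a3" "a3 \<ge> 0"
    using assms unfolding is_svd_def by blast
  have "\<bar>det U\<bar> = 1" "\<bar>det V\<bar> = 1"
    using det_orthogonal_matrix UV by fastforce+
  then show ?thesis
    using a by (simp add: M det_mul det_diag3 abs_mult)
qed

lemma is_svd_unique:
  assumes "det M \<noteq> 0" "is_svd M a1 a2 a3" "is_svd M b1 b2 b3"
  shows "(a1, a2, a3) = (b1, b2, b3)"
proof -
  have "a1 \<le> b1" if a: "is_svd M a1 a2 a3" and b: "is_svd M b1 b2 b3" for a1 a2 a3 b1 b2 b3
  proof -
    obtain x where "norm x = 1" "norm (M *v x) = a1"
      using is_svd_attained(1)[OF a] by blast
    then show ?thesis
      using is_svd_norm_bounds(1)[OF b, of x] by simp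
  qed
  then have a1_eq: "a1 = b1"
    using assms(2,3) by (meson antisym)
  have "a3 \<le> b3" if a: "is_svd M a1 a2 a3" and b: "is_svd M b1 b2 b3" for a1 a2 a3 b1 b2 b3
  proof -
    obtain x where "norm x = 1" "norm (M *v x) = b3"
      using is_svd_attained(2)[OF b] by blast
    then show ?thesis
      using is_svd_norm_bounds(2)[OF a, of x] by simp
  qed
  then have a3_eq: "a3 = b3"
    using assms(2,3) by (meson antisym)
  have "a1 * a2 * a3 = b1 * b2 * b3" "a1 * a2 * a3 \<noteq> 0"
    using assms is_svd_abs_det[OF assms(2)] is_svd_abs_det[OF assms(3)] by auto
  with a1_eq a3_eq show ?thesis
    by auto
qed

lemma nonpos_quadratic_linear_coeff_zero:
  fixes b k :: real
  assumes "\<And>t. 2 * t * b + t\<^sup>2 * k \<le> 0"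
  shows "b = 0"
proof (rule ccontr)
  assume "b \<noteq> 0"
  define K where "K = \<bar>k\<bar> + 1"
  have K: "K > 0" "- K \<le> k"
    unfolding K_def by auto
  have "0 < b\<^sup>2 / K"
    using \<open>b \<noteq> 0\<close> K by simp
  also have "b\<^sup>2 / K = 2 * (b / K) * b + (b / K)\<^sup>2 * (- K)"
    using K by (simp add: power2_eq_square field_simps)
  also have "\<dots> \<le> 2 * (b / K) * b + (b / K)\<^sup>2 * k"
    using K by (intro add_left_mono mult_left_mono) auto
  finally show False
    using assms[of "b / K"] by simp
qed

lemma linear_maximizer_orthogonal_image:
  fixes f :: "'a::real_inner \<Rightarrow> 'b::real_inner"
  assumes f: "linear f" and S: "subspace S" and v: "v \<in> S" "norm v = 1"
    and max: "\<And>x. x \<in> S \<Longrightarrow> norm x = 1 \<Longrightarrow> norm (f x) \<le> norm (f v)"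
    and w: "w \<in> S" "w \<bullet> v = 0"
  shows "f w \<bullet> f v = 0"
proof -
  define a where "a = norm (f v)"
  have bound: "norm (f x) \<le> a * norm x" if "x \<in> S" for x
  proof (cases "x = 0")
    case False
    have "norm (f (x /\<^sub>R norm x)) \<le> a"
      using max[of "x /\<^sub>R norm x"] that False S unfolding a_def by (simp add: subspace_scale)
    then show ?thesis
      using False by (simp add: linear_scale[OF f] field_simps)
  qed (simp add: linear_0[OF f])
  have "2 * t * (f w \<bullet> f v) + t\<^sup>2 * ((norm (f w))\<^sup>2 - a\<^sup>2 * (norm w)\<^sup>2) \<le> 0" for t
  proof -
    have "v + t *\<^sub>R w \<in> S"
      using S v w by (simp add: subspace_add subspace_scale)
    then have "(norm (f (v + t *\<^sub>R w)))\<^sup>2 \<le> (a * norm (v + t *\<^sub>R w))\<^sup>2"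
      using bound by (meson norm_ge_zero power_mono)
    moreover have "(norm (f (v + t *\<^sub>R w)))\<^sup>2 = a\<^sup>2 + 2 * t * (f w \<bullet> f v) + t\<^sup>2 * (norm (f w))\<^sup>2"
      unfolding a_def power2_norm_eq_inner linear_add[OF f] linear_scale[OF f]
      by (simp add: inner_add_left inner_add_right inner_commute power2_eq_square algebra_simps)
    moreover have "(a * norm (v + t *\<^sub>R w))\<^sup>2 = a\<^sup>2 * (1 + t\<^sup>2 * (norm w)\<^sup>2)"
      using v w norm_eq_1[of v] unfolding power_mult_distrib power2_norm_eq_inner
      by (simp add: inner_add_left inner_add_right inner_commute power2_eq_square algebra_simps)
    ultimately show ?thesis
      by (simp add: algebra_simps)
  qed
  then show ?thesis
    by (rule nonpos_quadratic_linear_coeff_zero)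
qed

lemma diag3_mult_vec_fun: "diag3 (d 0) (d 1) (d 2) *v y = (\<chi> i. d i * y $ i)"
proof -
  have "(if i = 0 then d 0 else if i = 1 then d 1 else d 2) = d i" for i :: 3
    using exhaust_3_0[of i] by auto
  then show ?thesis
    unfolding diag3_mult_vec by simp
qed

lemma orthogonal_matrix_row_expansion:
  fixes V :: "real^'n^'n"
  assumes "orthogonal_matrix V"
  shows "x = (\<Sum>j\<in>UNIV. (row j V \<bullet> x) *\<^sub>R row j V)"
proof -
  have "x = transpose V *v (V *v x)"
    using assms by (simp add: matrix_vector_mul_assoc orthogonal_matrix_def del: transpose_matrix_vector)
  also have "\<dots> = (\<Sum>j\<in>UNIV. (row j V \<bullet> x) *\<^sub>R row j V)"
    unfolding matrix_mult_sum[of "transpose V"] column_transpose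
    by (simp add: scalar_mult_eq_scaleR matrix_vector_mult_def inner_vec_def row_def)
  finally show ?thesis .
qed

lemma svd_of_orthonormal_basis:
  fixes M :: "real^3^3" and v :: "3 \<Rightarrow> real^3"
  assumes unit: "\<And>i. norm (v i) = 1" and orth: "\<And>i j. i \<noteq> j \<Longrightarrow> v i \<bullet> v j = 0"
    and image_orth: "\<And>i j. i \<noteq> j \<Longrightarrow> (M *v v i) \<bullet> (M *v v j) = 0"
    and nonzero: "\<And>i. M *v v i \<noteq> 0"
  defines "d \<equiv> \<lambda>i. norm (M *v v i)"
  shows "\<exists>U V. orthogonal_matrix U \<and> orthogonal_matrix V \<and> M = U ** diag3 (d 0) (d 1) (d 2) ** V"
proof -
  define V where "V = (\<chi> i. v i)"
  define U where "U = (\<chi> i j. (M *v v j) $ i / d j)"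
  have d: "d i > 0" for i
    unfolding d_def using nonzero by simp
  have row_V: "row i V = v i" for i
    unfolding V_def row_def by (simp add: vec_eq_iff)
  have column_U: "column j U = (1 / d j) *\<^sub>R (M *v v j)" for j
    unfolding U_def column_def by (simp add: vec_eq_iff)
  have V: "orthogonal_matrix V"
    unfolding orthogonal_matrix_orthonormal_rows row_V using unit orth by (simp add: orthogonal_def)
  have U: "orthogonal_matrix U"
    unfolding orthogonal_matrix_orthonormal_columns column_U
    using d image_orth by (simp add: orthogonal_def d_def)
  have V_mult: "V *v x = (\<chi> i. v i \<bullet> x)" for x
    unfolding V_def by (simp add: matrix_vector_mult_def inner_vec_def vec_eq_iff)
  have expand: "x = (\<Sum>j\<in>UNIV. (v j \<bullet> x) *\<^sub>R v j)" for x
    using orthogonal_matrix_row_expansion[OF V] unfolding row_V .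
  have "(U ** diag3 (d 0) (d 1) (d 2) ** V) *v x = M *v x" for x
  proof -
    have "(U ** diag3 (d 0) (d 1) (d 2) ** V) *v x = U *v (diag3 (d 0) (d 1) (d 2) *v (V *v x))"
      by (simp add: matrix_vector_mul_assoc matrix_mul_assoc)
    also have "\<dots> = (\<Sum>j\<in>UNIV. (d j * (v j \<bullet> x)) *\<^sub>R ((1 / d j) *\<^sub>R (M *v v j)))"
      unfolding V_mult diag3_mult_vec_fun matrix_mult_sum[of U] column_U by (simp add: scalar_mult_eq_scaleR)
    also have "\<dots> = (\<Sum>j\<in>UNIV. (v j \<bullet> x) *\<^sub>R (M *v v j))"
      using d by (intro sum.cong refl) (simp add: less_imp_neq[symmetric])
    also have "\<dots> = M *v x"
      by (subst (2) expand) (simp add: matrix_vector_mult_scaleR linear_sum[OF matrix_vector_mul_linear])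
    finally show ?thesis .
  qed
  then have "M = U ** diag3 (d 0) (d 1) (d 2) ** V"
    by (simp add: matrix_eq)
  with U V show ?thesis
    by blast
qed

lemma matrix_norm_attains_max_on_subspace:
  fixes M :: "real^'n^'m"
  assumes "subspace S" "S \<noteq> {0}"
  obtains v where "v \<in> S" "norm v = 1" "\<And>x. x \<in> S \<Longrightarrow> norm x = 1 \<Longrightarrow> norm (M *v x) \<le> norm (M *v v)"
proof -
  obtain y where "y \<in> S" "y \<noteq> 0"
    using assms subspace_0 by auto
  then have "y /\<^sub>R norm y \<in> sphere 0 1 \<inter> S"
    using assms(1) by (simp add: subspace_scale)
  moreover have "compact (sphere 0 1 \<inter> S)"
    using assms(1) by (intro compact_Int_closed compact_sphere closed_subspace)
  moreover have "continuous_on (sphere 0 1 \<inter> S) (\<lambda>x. norm (M *v x))"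
    by (intro continuous_on_norm linear_continuous_on matrix_vector_mul_bounded_linear)
  ultimately obtain v where "v \<in> sphere 0 1 \<inter> S" "\<forall>x \<in> sphere 0 1 \<inter> S. norm (M *v x) \<le> norm (M *v v)"
    using continuous_attains_sup by (metis empty_iff)
  then show thesis
    using that[of v] by simp
qed

(* v1 maximises |M x| on the unit sphere, v2 on the unit circle orthogonal to v1, and v3 = v1 x v2. *)
lemma orthonormal_basis_orthogonal_images:
  fixes M :: "real^3^3"
  obtains v1 v2 v3 :: "real^3" where "norm v1 = 1" "norm v2 = 1" "norm v3 = 1"
    "v1 \<bullet> v2 = 0" "v1 \<bullet> v3 = 0" "v2 \<bullet> v3 = 0"
    "(M *v v1) \<bullet> (M *v v2) = 0" "(M *v v1) \<bullet> (M *v v3) = 0" "(M *v v2) \<bullet> (M *v v3) = 0"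
    "norm (M *v v2) \<le> norm (M *v v1)" "norm (M *v v3) \<le> norm (M *v v2)"
proof -
  have "axis 0 1 \<notin> {0::real^3}"
    by (simp add: axis_eq_0_iff)
  then have "(UNIV :: (real^3) set) \<noteq> {0}"
    by blast
  then obtain v1 where v1: "norm v1 = 1"
    and max1: "\<And>x. x \<in> UNIV \<Longrightarrow> norm x = 1 \<Longrightarrow> norm (M *v x) \<le> norm (M *v v1)"
    by (rule matrix_norm_attains_max_on_subspace[OF subspace_UNIV]) (rule that)
  define H where "H = {x. v1 \<bullet> x = 0}"
  have "subspace H"
    unfolding H_def by (rule subspace_hyperplane)
  moreover obtain y where "y \<noteq> 0" "orthogonal v1 y"
    using orthogonal_to_vector_exists[of v1] by auto
  then have "y \<in> H - {0}"
    unfolding H_def orthogonal_def by simp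
  then have "H \<noteq> {0}"
    by blast
  ultimately obtain v2 where v2: "v2 \<in> H" "norm v2 = 1"
    and max2: "\<And>x. x \<in> H \<Longrightarrow> norm x = 1 \<Longrightarrow> norm (M *v x) \<le> norm (M *v v2)"
    by (rule matrix_norm_attains_max_on_subspace) (rule that)
  define v3 where "v3 = cross3 v1 v2"
  have v3: "v3 \<in> H" "v3 \<bullet> v2 = 0"
    unfolding v3_def H_def by (simp_all add: dot_cross_self)
  have "(norm v3)\<^sup>2 = 1"
    unfolding v3_def norm_cross using v1 v2 H_def by simp
  then have v3_unit: "norm v3 = 1"
    using norm_ge_zero[of v3] by (auto simp: power2_eq_1_iff)
  note max_orth = linear_maximizer_orthogonal_image[OF matrix_vector_mul_linear]
  have v21: "v2 \<bullet> v1 = 0" and v31: "v3 \<bullet> v1 = 0"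
    using v2(1) v3(1) unfolding H_def by (simp_all add: inner_commute)
  have "(M *v v2) \<bullet> (M *v v1) = 0"
    by (rule max_orth[OF subspace_UNIV UNIV_I v1 max1 UNIV_I v21])
  moreover have "(M *v v3) \<bullet> (M *v v1) = 0"
    by (rule max_orth[OF subspace_UNIV UNIV_I v1 max1 UNIV_I v31])
  moreover have "(M *v v3) \<bullet> (M *v v2) = 0"
    by (rule max_orth[OF \<open>subspace H\<close> v2 max2 v3])
  moreover have "norm (M *v v2) \<le> norm (M *v v1)" "norm (M *v v3) \<le> norm (M *v v2)"
    by (rule max1[OF UNIV_I v2(2)], rule max2[OF v3(1) v3_unit])
  ultimately show thesis
    using v1 v2 v3 v3_unit unfolding H_def by (intro that[of v1 v2 v3]) (simp_all add: inner_commute)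
qed

lemma is_svd_exists:
  fixes M :: "real^3^3"
  assumes "det M \<noteq> 0"
  obtains a1 a2 a3 where "is_svd M a1 a2 a3" "a3 > 0"
proof -
  obtain v1 v2 v3 :: "real^3" where unit: "norm v1 = 1" "norm v2 = 1" "norm v3 = 1"
    and orth: "v1 \<bullet> v2 = 0" "v1 \<bullet> v3 = 0" "v2 \<bullet> v3 = 0"
    and image_orth: "(M *v v1) \<bullet> (M *v v2) = 0" "(M *v v1) \<bullet> (M *v v3) = 0" "(M *v v2) \<bullet> (M *v v3) = 0"
    and ordered: "norm (M *v v2) \<le> norm (M *v v1)" "norm (M *v v3) \<le> norm (M *v v2)"
    by (rule orthonormal_basis_orthogonal_images)
  have nonzero: "M *v x \<noteq> 0" if "norm x = 1" for x
    using assms that invertible_det_nz inj_matrix_vector_mult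
    by (metis matrix_vector_mult_0_right injD norm_zero zero_neq_one)
  define v :: "3 \<Rightarrow> real^3" where "v i = (if i = 0 then v1 else if i = 1 then v2 else v3)" for i
  have v_simps: "v 0 = v1" "v 1 = v2" "v 2 = v3"
    by (simp_all add: v_def)
  have "\<exists>U V. orthogonal_matrix U \<and> orthogonal_matrix V \<and>
      M = U ** diag3 (norm (M *v v 0)) (norm (M *v v 1)) (norm (M *v v 2)) ** V"
  proof (rule svd_of_orthonormal_basis)
    show unit_v: "norm (v i) = 1" for i
      using exhaust_3_0[of i] unit by (elim disjE) (simp_all add: v_simps)
    show "M *v v i \<noteq> 0" for i
      by (rule nonzero[OF unit_v])
    show "v i \<bullet> v j = 0" "(M *v v i) \<bullet> (M *v v j) = 0" if "i \<noteq> j" for i j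
      using exhaust_3_0[of i] exhaust_3_0[of j] that orth image_orth
      by (elim disjE; simp add: v_simps inner_commute)+
  qed
  then obtain U V where "orthogonal_matrix U" "orthogonal_matrix V"
    "M = U ** diag3 (norm (M *v v1)) (norm (M *v v2)) (norm (M *v v3)) ** V"
    unfolding v_simps by blast
  moreover have "norm (M *v v3) > 0"
    using nonzero[OF unit(3)] by simp
  ultimately show thesis
    using ordered by (intro that[of "norm (M *v v1)" "norm (M *v v2)" "norm (M *v v3)"]) (auto simp: is_svd_def)
qed

lemma sing_vals_eq:
  assumes "det M \<noteq> 0" "is_svd M a1 a2 a3"
  shows "sing_vals M = (a1, a2, a3)"
proof -
  have "sing_vals M = (THE (a1, a2, a3). is_svd M a1 a2 a3)"
    by (simp add: sing_vals_def is_svd_def)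
  also have "\<dots> = (a1, a2, a3)"
  proof (rule the_equality)
    show "case (a1, a2, a3) of (a1, a2, a3) \<Rightarrow> is_svd M a1 a2 a3"
      using assms(2) by simp
    show "x = (a1, a2, a3)" if "case x of (b1, b2, b3) \<Rightarrow> is_svd M b1 b2 b3" for x
      using that is_svd_unique[OF assms] by (cases x) simp
  qed
  finally show ?thesis .
qed

lemma
  assumes "det M \<noteq> 0"
  shows is_svd_alpha: "is_svd M (alpha1 M) (alpha2 M) (alpha3 M)"
    and alpha3_pos: "alpha3 M > 0"
proof -
  obtain a1 a2 a3 where "is_svd M a1 a2 a3" "a3 > 0"
    using is_svd_exists[OF assms] .
  moreover from this have "sing_vals M = (a1, a2, a3)"
    using assms sing_vals_eq by blast
  ultimately show "is_svd M (alpha1 M) (alpha2 M) (alpha3 M)" "alpha3 M > 0"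
    by (simp_all add: alpha1_def alpha2_def alpha3_def)
qed

lemma alpha_ordered:
  assumes "det M \<noteq> 0"
  shows "alpha1 M \<ge> alpha2 M" "alpha2 M \<ge> alpha3 M"
  using is_svd_alpha[OF assms] unfolding is_svd_def by auto

lemma
  assumes "det M \<noteq> 0"
  shows alpha1_pos: "alpha1 M > 0" and alpha2_pos: "alpha2 M > 0"
  using alpha_ordered[OF assms] alpha3_pos[OF assms] by linarith+

lemma norm_mult_vec_le_alpha1:
  assumes "det M \<noteq> 0"
  shows "norm (M *v x) \<le> alpha1 M * norm x"
  using is_svd_norm_bounds(1)[OF is_svd_alpha[OF assms]] .

lemma alpha3_le_norm_mult_vec:
  assumes "det M \<noteq> 0"
  shows "alpha3 M * norm x \<le> norm (M *v x)"
  using is_svd_norm_bounds(2)[OF is_svd_alpha[OF assms]] .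

lemma alpha_prod_eq_abs_det:
  assumes "det M \<noteq> 0"
  shows "alpha1 M * alpha2 M * alpha3 M = \<bar>det M\<bar>"
  using is_svd_abs_det[OF is_svd_alpha[OF assms]] by simp

lemma alpha1_mult_le:
  fixes P Q :: "real^3^3"
  assumes "det P \<noteq> 0" "det Q \<noteq> 0"
  shows "alpha1 (P ** Q) \<le> alpha1 P * alpha1 Q"
proof -
  have "det (P ** Q) \<noteq> 0"
    using assms by (simp add: det_mul)
  then obtain x where x: "norm x = 1" "norm ((P ** Q) *v x) = alpha1 (P ** Q)"
    using is_svd_attained(1)[OF is_svd_alpha] by blast
  have "norm ((P ** Q) *v x) = norm (P *v (Q *v x))"
    by (simp add: matrix_vector_mul_assoc)
  also have "\<dots> \<le> alpha1 P * norm (Q *v x)"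
    by (rule norm_mult_vec_le_alpha1[OF assms(1)])
  also have "\<dots> \<le> alpha1 P * (alpha1 Q * norm x)"
    using norm_mult_vec_le_alpha1[OF assms(2)] alpha1_pos[OF assms(1)] by (simp add: mult_left_mono)
  finally show ?thesis
    using x by simp
qed

lemma ln_alpha2_det_1:
  assumes "det M = 1"
  shows "ln (alpha2 M) = - ln (alpha1 M) - ln (alpha3 M)"
proof -
  have det: "det M \<noteq> 0"
    using assms by simp
  then have "ln (alpha1 M * alpha2 M * alpha3 M) = 0"
    using alpha_prod_eq_abs_det assms by simp
  then show ?thesis
    using alpha1_pos[OF det] alpha2_pos[OF det] alpha3_pos[OF det] by (simp add: ln_mult)
qed

(* Substituting alpha2 = 1 / (alpha1 * alpha3) turns each branch of phi into a monomial in 1 / alpha3 and alpha1. *)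
lemma phi_eq_powr_alpha:
  assumes "s \<ge> 0"
  obtains p q :: real where "p \<ge> 0" "q \<ge> 0"
    "\<And>M. det M = 1 \<Longrightarrow> phi s M = (1 / alpha3 M) powr p * alpha1 M powr (- q)"
proof -
  have pos: "alpha1 M > 0" "alpha2 M > 0" "alpha3 M > 0" if "det M = 1" for M
    using that alpha1_pos[of M] alpha2_pos[of M] alpha3_pos[of M] by simp_all
  consider "s \<le> 1" | "1 < s" "s \<le> 2" | "2 < s"
    by linarith
  then show thesis
  proof cases
    case 1
    show thesis
    proof (rule that[of s "2 * s"])
      show "phi s M = (1 / alpha3 M) powr s * alpha1 M powr (- (2 * s))" if "det M = 1" for M
        using 1 pos[OF that]
        by (simp add: ln_alpha2_det_1[OF that] phi_def powr_def ln_div mult_exp_exp algebra_simps)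
    qed (use assms in auto)
  next
    case 2
    show thesis
    proof (rule that[of "2 - s" "s + 1"])
      show "phi s M = (1 / alpha3 M) powr (2 - s) * alpha1 M powr (- (s + 1))" if "det M = 1" for M
      proof -
        have "phi s M = (alpha2 M / alpha1 M) * (alpha3 M / alpha1 M) powr (s - 1)"
          using 2 by (simp add: phi_def)
        also have "alpha2 M / alpha1 M = exp (ln (alpha2 M) - ln (alpha1 M))"
          using pos[OF that] by (simp add: exp_diff)
        also have "exp (ln (alpha2 M) - ln (alpha1 M)) * (alpha3 M / alpha1 M) powr (s - 1) =
            (1 / alpha3 M) powr (2 - s) * alpha1 M powr (- (s + 1))"
          using pos[OF that] by (simp add: ln_alpha2_det_1[OF that] powr_def ln_div mult_exp_exp algebra_simps)
        finally show ?thesis .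
      qed
    qed (use 2 in auto)
  next
    case 3
    show thesis
    proof (rule that[of 0 "3 * s"])
      show "phi s M = (1 / alpha3 M) powr 0 * alpha1 M powr (- (3 * s))" if "det M = 1" for M
        using 3 pos[OF that]
        by (simp add: ln_alpha2_det_1[OF that] phi_def powr_def ln_div ln_mult ln_realpow mult_exp_exp algebra_simps)
    qed (use 3 in auto)
  qed
qed

section \<open>Inverse matrices and the Frobenius norm\<close>

lemma matrix_inv_right: "invertible A \<Longrightarrow> A ** matrix_inv A = mat 1"
  and matrix_inv_left: "invertible A \<Longrightarrow> matrix_inv A ** A = mat 1"
  unfolding invertible_def matrix_inv_def by (metis (mono_tags, lifting) someI_ex)+

lemma matrix_inv_unique:
  fixes A B :: "'a::field^'n^'n"
  assumes "A ** B = mat 1"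
  shows "matrix_inv A = B"
proof -
  have "invertible A"
    using assms invertible_right_inverse by blast
  then have "matrix_inv A = matrix_inv A ** (A ** B)"
    using assms by simp
  also have "\<dots> = B"
    using \<open>invertible A\<close> by (simp add: matrix_mul_assoc matrix_inv_left)
  finally show ?thesis .
qed

lemma matrix_inv_mult:
  fixes A B :: "'a::field^'n^'n"
  assumes "invertible A" "invertible B"
  shows "matrix_inv (A ** B) = matrix_inv B ** matrix_inv A"
proof (rule matrix_inv_unique)
  have "A ** B ** (matrix_inv B ** matrix_inv A) = A ** (B ** matrix_inv B) ** matrix_inv A"
    by (simp add: matrix_mul_assoc)
  then show "A ** B ** (matrix_inv B ** matrix_inv A) = mat 1"
    using assms by (simp add: matrix_inv_right)
qed

(* On real^'n^'m, norm is the Frobenius norm, not the operator norm. *)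
lemma norm_matrix_vector_mult_le:
  fixes N :: "real^'n^'m"
  shows "norm (N *v x) \<le> norm N * norm x"
proof -
  have "\<bar>(N *v x) $ i\<bar> \<le> norm (N $ i) * norm x" for i
    by (simp add: matrix_mult_dot Cauchy_Schwarz_ineq2)
  then have "L2_set (\<lambda>i. \<bar>(N *v x) $ i\<bar>) UNIV \<le> L2_set (\<lambda>i. norm (N $ i) * norm x) UNIV"
    by (intro L2_set_mono) auto
  then show ?thesis
    unfolding norm_vec_def by (simp add: L2_set_right_distrib mult.commute)
qed

lemma norm_matrix_le_of_bound:
  fixes N :: "real^'n^'m"
  assumes "\<And>x. norm (N *v x) \<le> b * norm x"
  shows "norm N \<le> real CARD('m) * real CARD('n) * b"
proof -
  have entry: "\<bar>N $ i $ j\<bar> \<le> b" for i j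
  proof -
    have "\<bar>N $ i $ j\<bar> = \<bar>(N *v axis j 1) $ i\<bar>"
      by (simp add: matrix_vector_mult_def axis_def if_distrib cong: if_cong)
    also have "\<dots> \<le> norm (N *v axis j 1)"
      by (rule component_le_norm_cart)
    also have "\<dots> \<le> b"
      using assms[of "axis j 1"] by (simp add: norm_axis_1)
    finally show ?thesis .
  qed
  have "norm N \<le> (\<Sum>i\<in>UNIV. norm (N $ i))"
    unfolding norm_vec_def by (rule L2_set_le_sum) simp
  also have "\<dots> \<le> (\<Sum>i\<in>(UNIV::'m set). \<Sum>j\<in>(UNIV::'n set). b)"
    using entry by (intro sum_mono order_trans[OF norm_le_l1_cart]) simp
  finally show ?thesis
    by simp
qed

lemma norm_matrix_inv_le_alpha3:
  assumes "det M \<noteq> 0"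
  shows "norm (matrix_inv M) \<le> 9 / alpha3 M"
proof -
  have M: "invertible M"
    using assms invertible_det_nz by blast
  have "norm (matrix_inv M *v y) \<le> (1 / alpha3 M) * norm y" for y
  proof -
    have "alpha3 M * norm (matrix_inv M *v y) \<le> norm (M *v (matrix_inv M *v y))"
      by (rule alpha3_le_norm_mult_vec[OF assms])
    also have "M *v (matrix_inv M *v y) = y"
      using M by (simp add: matrix_vector_mul_assoc matrix_inv_right)
    finally show ?thesis
      using alpha3_pos[OF assms] by (simp add: field_simps)
  qed
  then show ?thesis
    using norm_matrix_le_of_bound by fastforce
qed

lemma inverse_alpha3_le_norm_matrix_inv:
  assumes "det M \<noteq> 0"
  shows "1 / alpha3 M \<le> norm (matrix_inv M)"
proof -
  obtain x where x: "norm x = 1" "norm (M *v x) = alpha3 M"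
    using is_svd_attained(2)[OF is_svd_alpha[OF assms]] by blast
  have "invertible M"
    using assms invertible_det_nz by blast
  then have "matrix_inv M *v (M *v x) = x"
    by (simp add: matrix_vector_mul_assoc matrix_inv_left)
  then have "1 \<le> norm (matrix_inv M) * alpha3 M"
    using norm_matrix_vector_mult_le[of "matrix_inv M" "M *v x"] x by simp
  then show ?thesis
    using alpha3_pos[OF assms] by (simp add: field_simps)
qed

section \<open>Products along words and irreducibility\<close>

lemma word_mat_Nil [simp]: "word_mat A [] = mat 1"
  and word_mat_Cons [simp]: "word_mat A (i # u) = A i ** word_mat A u"
  by (simp_all add: word_mat_def)

lemma word_mat_append: "word_mat A (u @ w) = word_mat A u ** word_mat A w"
  by (induction u) (simp_all add: matrix_mul_assoc)

lemma det_word_mat_nonzero: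
  assumes "\<And>i. det (A i) \<noteq> 0"
  shows "det (word_mat A u) \<noteq> 0"
  using assms by (induction u) (simp_all add: det_mul)

lemma invertible_word_mat:
  assumes "\<And>i. invertible (A i)"
  shows "invertible (word_mat A u)"
proof (induction u)
  case Nil
  have "mat 1 ** mat 1 = (mat 1 :: real^3^3)"
    by simp
  then show ?case
    unfolding invertible_def by auto
qed (simp add: assms invertible_mult)

lemma matrix_inv_word_mat:
  assumes "\<And>i. invertible (A i)"
  shows "matrix_inv (word_mat A u) = word_mat (\<lambda>i. matrix_inv (A i)) (rev u)"
proof (induction u)
  case Nil
  show ?case
    by (simp add: matrix_inv_unique)
next
  case (Cons i u)
  show ?case
    using assms Cons.IH invertible_word_mat[of A, OF assms] by (simp add: matrix_inv_mult word_mat_append)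
qed

lemma linear_inj_image_subspace_eq:
  fixes f :: "'a::euclidean_space \<Rightarrow> 'a"
  assumes "linear f" "inj f" "subspace V" "f ` V \<subseteq> V"
  shows "f ` V = V"
proof (rule subspace_dim_equal)
  show "subspace (f ` V)"
    using assms by (simp add: linear_subspace_image)
  have "dim (f ` V) = dim V"
    by (rule dim_image_eq[OF assms(1)]) (use assms(2) in \<open>auto simp: inj_on_def inj_def\<close>)
  then show "dim V \<le> dim (f ` V)"
    by simp
qed (fact assms)+

lemma irreducible_family_matrix_inv:
  assumes inv: "\<And>i. invertible (A i)" and irr: "irreducible_family A"
  shows "irreducible_family (\<lambda>i. matrix_inv (A i))"
  unfolding irreducible_family_def
proof
  assume "\<exists>V. subspace V \<and> V \<noteq> {0} \<and> V \<noteq> UNIV \<and> (\<forall>i. \<forall>v\<in>V. matrix_inv (A i) *v v \<in> V)"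
  then obtain V where V: "subspace V" "V \<noteq> {0}" "V \<noteq> UNIV"
    and invariant: "\<And>i v. v \<in> V \<Longrightarrow> matrix_inv (A i) *v v \<in> V"
    by blast
  have "A i *v v \<in> V" if "v \<in> V" for i v
  proof -
    have "invertible (matrix_inv (A i))"
      unfolding invertible_def using matrix_inv_left[OF inv] matrix_inv_right[OF inv] by blast
    moreover have "(*v) (matrix_inv (A i)) ` V \<subseteq> V"
      using invariant by (rule image_subsetI)
    ultimately have "(*v) (matrix_inv (A i)) ` V = V"
      by (intro linear_inj_image_subspace_eq[OF matrix_vector_mul_linear inj_matrix_vector_mult V(1)])
    with that have "v \<in> (*v) (matrix_inv (A i)) ` V"
      by simp
    then obtain w where "w \<in> V" "v = matrix_inv (A i) *v w"
      by blast
    then show ?thesis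
      using inv by (simp add: matrix_vector_mul_assoc matrix_inv_right)
  qed
  with V irr show False
    unfolding irreducible_family_def by blast
qed

lemma irreducible_family_word_nonzero:
  fixes X Y :: "real^3^3"
  assumes irr: "irreducible_family B" and "X \<noteq> 0" "Y \<noteq> 0"
  shows "\<exists>u. X ** word_mat B u ** Y \<noteq> 0"
proof (rule ccontr)
  assume "\<nexists>u. X ** word_mat B u ** Y \<noteq> 0"
  then have zero: "X ** word_mat B u ** Y = 0" for u
    by blast
  define V where "V = {z. \<forall>u. X *v (word_mat B u *v z) = 0}"
  have "subspace V"
    unfolding subspace_def V_def by (simp add: matrix_vector_right_distrib matrix_vector_mult_scaleR)
  moreover have "V \<noteq> {0}"
  proof -
    obtain z where "Y *v z \<noteq> 0"
      using \<open>Y \<noteq> 0\<close> matrix_eq[of Y 0] by auto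
    moreover have "Y *v z \<in> V"
      unfolding V_def using zero by (simp add: matrix_vector_mul_assoc)
    ultimately show ?thesis
      by blast
  qed
  moreover have "V \<noteq> UNIV"
  proof -
    obtain z where "X *v z \<noteq> 0"
      using \<open>X \<noteq> 0\<close> matrix_eq[of X 0] by auto
    then have "X *v (word_mat B [] *v z) \<noteq> 0"
      by simp
    then show ?thesis
      unfolding V_def by blast
  qed
  moreover have "\<forall>i. \<forall>v\<in>V. B i *v v \<in> V"
  proof (intro allI ballI)
    fix i v
    assume "v \<in> V"
    have "X *v (word_mat B u *v (B i *v v)) = X *v (word_mat B (u @ [i]) *v v)" for u
      by (simp add: word_mat_append matrix_vector_mul_assoc)
    with \<open>v \<in> V\<close> show "B i *v v \<in> V"
      unfolding V_def by simp
  qed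
  ultimately show False
    using irr unfolding irreducible_family_def by blast
qed

lemma irreducible_family_inverse_word_nonzero:
  fixes X Y :: "real^3^3"
  assumes inv: "\<And>i. invertible (A i)" and irr: "irreducible_family A" and "X \<noteq> 0" "Y \<noteq> 0"
  shows "\<exists>u. X ** matrix_inv (word_mat A u) ** Y \<noteq> 0"
proof -
  obtain u where "X ** word_mat (\<lambda>i. matrix_inv (A i)) u ** Y \<noteq> 0"
    using irreducible_family_word_nonzero[OF irreducible_family_matrix_inv[OF inv irr]] assms(3,4) by blast
  then show ?thesis
    using matrix_inv_word_mat[of A "rev u", OF inv] by (intro exI[of _ "rev u"]) simp
qed

section \<open>Quasimultiplicativity\<close>

lemma scaleR_matrix_mult_triple:
  fixes X :: "real^'m^'p" and B :: "real^'n^'m" and Y :: "real^'q^'n"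
  shows "(a *\<^sub>R X) ** B ** (b *\<^sub>R Y) = (a * b) *\<^sub>R (X ** B ** Y)"
  by (simp add: matrix_matrix_mult_def sum_distrib_left vec_eq_iff mult_ac)

lemma nonvanishing_products_unit_bound:
  fixes B :: "'w \<Rightarrow> real^'n^'m"
  assumes nonzero: "\<And>(X::real^'m^'p) (Y::real^'q^'n). X \<noteq> 0 \<Longrightarrow> Y \<noteq> 0 \<Longrightarrow> \<exists>k. X ** B k ** Y \<noteq> 0"
  obtains \<Gamma> c where "finite \<Gamma>" "c > 0"
    "\<And>(X::real^'m^'p) (Y::real^'q^'n). norm X = 1 \<Longrightarrow> norm Y = 1 \<Longrightarrow> \<exists>k\<in>\<Gamma>. c < norm (X ** B k ** Y)"
proof -
  define K where "K = sphere (0::real^'m^'p) 1 \<times> sphere (0::real^'q^'n) 1"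
  define G where "G = (\<lambda>(k, n::nat). {z :: (real^'m^'p) \<times> (real^'q^'n). 1 / real (Suc n) < norm (fst z ** B k ** snd z)})"
  have "compact K"
    unfolding K_def by (intro compact_Times compact_sphere)
  moreover have "open (G kn)" for kn
    unfolding G_def case_prod_beta matrix_matrix_mult_def by (intro open_Collect_less continuous_intros)
  moreover have "K \<subseteq> (\<Union>kn. G kn)"
  proof
    fix z
    assume "z \<in> K"
    then have "fst z \<noteq> 0" "snd z \<noteq> 0"
      unfolding K_def by (auto simp: mem_Times_iff)
    then obtain k where "norm (fst z ** B k ** snd z) > 0"
      using nonzero by auto
    then obtain n where "inverse (real (Suc n)) < norm (fst z ** B k ** snd z)"
      using reals_Archimedean by blast
    then have "z \<in> G (k, n)"
      unfolding G_def by (simp add: inverse_eq_divide)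
    then show "z \<in> (\<Union>kn. G kn)"
      by blast
  qed
  ultimately obtain D where D: "finite D" "K \<subseteq> (\<Union>kn\<in>D. G kn)"
    by (meson compactE_image)
  define N where "N = (\<Sum>kn\<in>D. snd kn)"
  have "\<exists>k\<in>fst ` D. 1 / real (Suc N) < norm (X ** B k ** Y)" if "norm X = 1" "norm Y = 1"
    for X :: "real^'m^'p" and Y :: "real^'q^'n"
  proof -
    have "(X, Y) \<in> K"
      unfolding K_def using that by simp
    then obtain k n where kn: "(k, n) \<in> D" "(X, Y) \<in> G (k, n)"
      using D(2) by fast
    have "n \<le> N"
      unfolding N_def using member_le_sum[OF kn(1), of snd] D(1) by simp
    then have "1 / real (Suc N) \<le> 1 / real (Suc n)"
      by (intro divide_left_mono) auto
    also have "\<dots> < norm (X ** B k ** Y)"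
      using kn(2) unfolding G_def by simp
    finally show ?thesis
      using kn(1) by force
  qed
  then show thesis
    using D(1) by (intro that[of "fst ` D" "1 / real (Suc N)"]) auto
qed

lemma nonvanishing_products_uniform_bound:
  fixes B :: "'w \<Rightarrow> real^'n^'m"
  assumes nonzero: "\<And>(X::real^'m^'p) (Y::real^'q^'n). X \<noteq> 0 \<Longrightarrow> Y \<noteq> 0 \<Longrightarrow> \<exists>k. X ** B k ** Y \<noteq> 0"
  obtains \<Gamma> c where "finite \<Gamma>" "c > 0"
    "\<And>(X::real^'m^'p) (Y::real^'q^'n). \<exists>k\<in>\<Gamma>. c * norm X * norm Y \<le> norm (X ** B k ** Y)"
proof -
  obtain \<Gamma> c where \<Gamma>: "finite \<Gamma>" "c > 0" and unit_bound:
    "\<And>(X::real^'m^'p) (Y::real^'q^'n). norm X = 1 \<Longrightarrow> norm Y = 1 \<Longrightarrow> \<exists>k\<in>\<Gamma>. c < norm (X ** B k ** Y)"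
    using nonvanishing_products_unit_bound[OF nonzero] by blast
  \<comment> \<open>Some word is needed for the degenerate case X = 0 or Y = 0.\<close>
  obtain k0 :: 'w where True
    by blast
  have "\<exists>k\<in>insert k0 \<Gamma>. c * norm X * norm Y \<le> norm (X ** B k ** Y)"
    for X :: "real^'m^'p" and Y :: "real^'q^'n"
  proof (cases "X = 0 \<or> Y = 0")
    case False
    then obtain k where "k \<in> \<Gamma>" and "c < norm ((X /\<^sub>R norm X) ** B k ** (Y /\<^sub>R norm Y))"
      using unit_bound[of "X /\<^sub>R norm X" "Y /\<^sub>R norm Y"] by auto
    moreover have "norm ((X /\<^sub>R norm X) ** B k ** (Y /\<^sub>R norm Y)) = norm (X ** B k ** Y) / (norm X * norm Y)"
      unfolding scaleR_matrix_mult_triple by (simp add: field_simps)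
    ultimately have "c * (norm X * norm Y) \<le> norm (X ** B k ** Y)"
      using False by (simp add: pos_less_divide_eq less_imp_le)
    with \<open>k \<in> \<Gamma>\<close> show ?thesis
      by (auto simp: mult.assoc)
  qed auto
  then show thesis
    using \<Gamma> by (intro that[of "insert k0 \<Gamma>" c]) auto
qed

lemma inverse_alpha3_word_mat_quasimult:
  assumes det: "\<And>i. det (A i) \<noteq> 0" and irr: "irreducible_family A"
  obtains \<Gamma> c where "finite \<Gamma>" "c > 0"
    "\<And>u w. \<exists>k\<in>\<Gamma>. c * (1 / alpha3 (word_mat A u)) * (1 / alpha3 (word_mat A w))
        \<le> 1 / alpha3 (word_mat A (u @ k @ w))"
proof -
  have inv: "invertible (A i)" for i
    using det invertible_det_nz by blast
  have nonzero: "\<exists>k. X ** matrix_inv (word_mat A k) ** Y \<noteq> 0" if "X \<noteq> 0" "Y \<noteq> 0" for X Y :: "real^3^3"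
    using irreducible_family_inverse_word_nonzero[OF inv irr that] .
  obtain \<Gamma> c where \<Gamma>: "finite \<Gamma>" "c > 0" and bound:
    "\<And>(X :: real^3^3) (Y :: real^3^3). \<exists>k\<in>\<Gamma>. c * norm X * norm Y \<le> norm (X ** matrix_inv (word_mat A k) ** Y)"
    using nonvanishing_products_uniform_bound[OF nonzero] by blast
  have "\<exists>k\<in>\<Gamma>. c / 9 * (1 / alpha3 (word_mat A u)) * (1 / alpha3 (word_mat A w))
      \<le> 1 / alpha3 (word_mat A (u @ k @ w))" for u w
  proof -
    define P R where "P = word_mat A u" and "R = word_mat A w"
    obtain k where "k \<in> \<Gamma>"
      and k: "c * norm (matrix_inv R) * norm (matrix_inv P) \<le> norm (matrix_inv R ** matrix_inv (word_mat A k) ** matrix_inv P)"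
      using bound by blast
    define T where "T = word_mat A (u @ k @ w)"
    have "matrix_inv T = matrix_inv R ** matrix_inv (word_mat A k) ** matrix_inv P"
      unfolding T_def P_def R_def word_mat_append
      using invertible_word_mat[of A, OF inv]
      by (simp add: matrix_inv_mult invertible_mult matrix_mul_assoc)
    have "c / 9 * (1 / alpha3 P) * (1 / alpha3 R) \<le> c / 9 * norm (matrix_inv P) * norm (matrix_inv R)"
      using inverse_alpha3_le_norm_matrix_inv alpha3_pos det_word_mat_nonzero[of A, OF det] \<Gamma>(2)
      unfolding P_def R_def by (intro mult_mono mult_left_mono) (auto simp: less_imp_le)
    also have "\<dots> \<le> norm (matrix_inv T) / 9"
      using k \<open>matrix_inv T = _\<close> by (simp add: mult_ac)
    also have "\<dots> \<le> 1 / alpha3 T"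
      using norm_matrix_inv_le_alpha3[OF det_word_mat_nonzero[of A, OF det]] unfolding T_def by simp
    finally show ?thesis
      using \<open>k \<in> \<Gamma>\<close> unfolding P_def R_def T_def by blast
  qed
  with \<Gamma> show thesis
    by (intro that[of \<Gamma> "c / 9"]) auto
qed

lemma alpha1_word_mat_insert_le:
  assumes det: "\<And>i. det (A i) \<noteq> 0" and "finite \<Gamma>"
  obtains C where "C > 0"
    "\<And>u k w. k \<in> \<Gamma> \<Longrightarrow> alpha1 (word_mat A (u @ k @ w)) \<le> C * alpha1 (word_mat A u) * alpha1 (word_mat A w)"
proof -
  note det_word = det_word_mat_nonzero[of A, OF det]
  define C where "C = 1 + (\<Sum>k\<in>\<Gamma>. alpha1 (word_mat A k))"
  have C: "alpha1 (word_mat A k) \<le> C" if "k \<in> \<Gamma>" for k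
    using member_le_sum[OF that, of "\<lambda>k. alpha1 (word_mat A k)"] \<open>finite \<Gamma>\<close> alpha1_pos[OF det_word]
    unfolding C_def by (simp add: less_imp_le)
  have "C > 0"
    unfolding C_def using alpha1_pos[OF det_word] by (simp add: add_pos_nonneg sum_nonneg less_imp_le)
  moreover have "alpha1 (word_mat A (u @ k @ w)) \<le> C * alpha1 (word_mat A u) * alpha1 (word_mat A w)"
    if "k \<in> \<Gamma>" for u k w
  proof -
    have "alpha1 (word_mat A (u @ k @ w)) \<le> alpha1 (word_mat A u) * alpha1 (word_mat A (k @ w))"
      unfolding word_mat_append[of A u] by (intro alpha1_mult_le det_word)
    also have "\<dots> \<le> alpha1 (word_mat A u) * (alpha1 (word_mat A k) * alpha1 (word_mat A w))"
      unfolding word_mat_append[of A k]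
      using alpha1_mult_le[OF det_word det_word] alpha1_pos[OF det_word] by (simp add: mult_left_mono)
    also have "\<dots> \<le> alpha1 (word_mat A u) * (C * alpha1 (word_mat A w))"
      using C[OF that] alpha1_pos[OF det_word] by (intro mult_left_mono mult_right_mono) (auto simp: less_imp_le)
    finally show ?thesis
      by (simp add: mult_ac)
  qed
  ultimately show thesis
    by (rule that)
qed

lemma powr_quasimult_bound:
  fixes b b1 b2 a a1 a2 c C p q :: real
  assumes "c * b1 * b2 \<le> b" "a \<le> C * a1 * a2" "b1 > 0" "b2 > 0" "a > 0" "a1 > 0" "a2 > 0" "c > 0" "C > 0"
    and "p \<ge> 0" "q \<ge> 0"
  shows "(c powr p * C powr (- q)) * (b1 powr p * a1 powr (- q)) * (b2 powr p * a2 powr (- q))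
    \<le> b powr p * a powr (- q)"
proof -
  have "c powr p * b1 powr p * b2 powr p \<le> b powr p"
    using assms powr_mono2[of p "c * b1 * b2" b] by (simp add: powr_mult)
  moreover have "C powr (- q) * a1 powr (- q) * a2 powr (- q) \<le> a powr (- q)"
    using assms powr_mono2'[of "- q" a "C * a1 * a2"] by (simp add: powr_mult)
  ultimately have "(c powr p * b1 powr p * b2 powr p) * (C powr (- q) * a1 powr (- q) * a2 powr (- q))
      \<le> b powr p * a powr (- q)"
    by (rule mult_mono) auto
  then show ?thesis
    by (simp add: ac_simps)
qed

lemma quasimultiplicative_powr:
  fixes g h :: "real^3^3 \<Rightarrow> real"
  assumes "finite \<Gamma>" "c > 0" "C > 0" "p \<ge> 0" "q \<ge> 0"
    and pos: "\<And>u. g (word_mat A u) > 0" "\<And>u. h (word_mat A u) > 0"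
    and g: "\<And>u w. \<exists>k\<in>\<Gamma>. c * g (word_mat A u) * g (word_mat A w) \<le> g (word_mat A (u @ k @ w))"
    and h: "\<And>u k w. k \<in> \<Gamma> \<Longrightarrow> h (word_mat A (u @ k @ w)) \<le> C * h (word_mat A u) * h (word_mat A w)"
    and f: "\<And>u. f (word_mat A u) = g (word_mat A u) powr p * h (word_mat A u) powr (- q)"
  shows "quasimultiplicative A f"
proof -
  have "\<exists>k\<in>\<Gamma>. (c powr p * C powr (- q)) * f (word_mat A u) * f (word_mat A w) \<le> f (word_mat A (u @ k @ w))"
    for u w
  proof -
    obtain k where "k \<in> \<Gamma>" and k: "c * g (word_mat A u) * g (word_mat A w) \<le> g (word_mat A (u @ k @ w))"
      using g by blast
    moreover have "(c powr p * C powr (- q)) * f (word_mat A u) * f (word_mat A w) \<le> f (word_mat A (u @ k @ w))"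
      unfolding f using assms(2-5) pos by (intro powr_quasimult_bound[OF k h[OF \<open>k \<in> \<Gamma>\<close>]])
    ultimately show ?thesis
      by blast
  qed
  moreover have "c powr p * C powr (- q) > 0"
    using assms(2,3) by simp
  ultimately show ?thesis
    unfolding quasimultiplicative_def using assms(1) by blast
qed

theorem corollary2p3:
  fixes A :: "'i::countable \<Rightarrow> real^3^3" and s :: real
  assumes "\<forall>i. det (A i) = 1"
    and "irreducible_family A"
    and "s \<ge> 0"
  shows "quasimultiplicative A (phi s)"
proof -
  have det: "det (A i) \<noteq> 0" for i
    using assms(1) by simp
  have det_word: "det (word_mat A u) = 1" for u
    using assms(1) by (induction u) (simp_all add: det_mul)
  obtain p q where pq: "p \<ge> 0" "q \<ge> 0"
    and phi: "\<And>M. det M = 1 \<Longrightarrow> phi s M = (1 / alpha3 M) powr p * alpha1 M powr (- q)"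
    using phi_eq_powr_alpha[OF assms(3)] by metis
  obtain \<Gamma> c where \<Gamma>: "finite \<Gamma>" "c > 0" and gap: "\<And>u w. \<exists>k\<in>\<Gamma>.
      c * (1 / alpha3 (word_mat A u)) * (1 / alpha3 (word_mat A w)) \<le> 1 / alpha3 (word_mat A (u @ k @ w))"
    by (rule inverse_alpha3_word_mat_quasimult[OF det assms(2)]) (rule that)
  obtain C where "C > 0" and norm_bound: "\<And>u k w. k \<in> \<Gamma> \<Longrightarrow>
      alpha1 (word_mat A (u @ k @ w)) \<le> C * alpha1 (word_mat A u) * alpha1 (word_mat A w)"
    by (rule alpha1_word_mat_insert_le[OF det \<Gamma>(1)]) (rule that)
  show ?thesis
  proof (rule quasimultiplicative_powr[OF \<Gamma> \<open>C > 0\<close> pq _ _ gap norm_bound])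
    show "1 / alpha3 (word_mat A u) > 0" "alpha1 (word_mat A u) > 0" for u
      using alpha1_pos alpha3_pos det_word by simp_all
    show "phi s (word_mat A u) = (1 / alpha3 (word_mat A u)) powr p * alpha1 (word_mat A u) powr (- q)" for u
      by (rule phi[OF det_word])
  qed
qed

end
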